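(* Let $V$ be a vector space over a field $\mathbb{K}$ and $F$ a bilinear form on $V$. For all integers $k,l\ge0$, $$a_k^F a_l^F=a_l^F a_k^F=\binom{k+l}{k}\,a_{k+l}^F$$ as endomorphisms of $\mathcal{T}(V)$.
   Context: $\mathcal{T}(V)$ is the tensor algebra of $V$. Define $a_0^F=\mathrm{Id}_{\mathcal{T}(V)}$ and, for $k>0$, the linear map $a_k^F$ on $\mathcal{T}(V)$ by $a_k^F(x_1\otimes\cdots\otimes x_p)=0$ if $p<2k$, and for $p\ge2k$ $$a_k^F(x_1\otimes\cdots\otimes x_p)=\sum_{(i_1,j_1,\dots,i_k,j_k)}(-1)^{\sigma}F(x_{i_1},x_{j_1})\cdots F(x_{i_k},x_{j_k})\,X_{(i_1,\dots,j_k)},$$ summing over pairwise distinct indices in $\{1,\dots,p\}$ with $i_l<j_l$ and $i_1<\cdots<i_k$, where $X_{(i_1,\dots,j_k)}$ is $x_1\otimes\cdots\otimes x_p$ with the factors $x_{i_1},x_{j_1},\dots,x_{i_k},x_{j_k}$ omitted, and $(-1)^\sigma$ is the sign of the permutation of $\{1,\dots,p\}$ given by $i_1,j_1,\dots,i_k,j_k$ followed by the remaining indices in increasing order. The binomial coefficient is interpreted as an integer multiple in $\mathbb{K}$. *)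

theory Defs
  imports Main "HOL.Vector_Spaces"
begin

text \<open>Elements of the tensor algebra T(V) are represented by finitely supported
  formal linear combinations of words (lists) over V, i.e. functions
  u :: 'v list \<Rightarrow> 'k with finite support, modulo the subspace spanned by the
  multilinearity relations.  The word [x1,...,xp] stands for x1 \<otimes> ... \<otimes> xp.\<close>

definition bilinear_form :: "('k::field \<Rightarrow> 'v::ab_group_add \<Rightarrow> 'v) \<Rightarrow> ('v \<Rightarrow> 'v \<Rightarrow> 'k) \<Rightarrow> bool" where
  "bilinear_form scale F \<longleftrightarrow>
     (\<forall>a x y z. F (scale a x + y) z = a * F x z + F y z) \<and>
     (\<forall>a x y z. F z (scale a x + y) = a * F z x + F z y)"

definition word :: "'v list \<Rightarrow> 'v list \<Rightarrow> 'k::field" where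
  "word w = (\<lambda>w'. if w' = w then 1 else 0)"

definition fin_supp :: "('v list \<Rightarrow> 'k::field) \<Rightarrow> bool" where
  "fin_supp u \<longleftrightarrow> finite {w. u w \<noteq> 0}"

inductive_set tensor_rel :: "('k::field \<Rightarrow> 'v::ab_group_add \<Rightarrow> 'v) \<Rightarrow> ('v list \<Rightarrow> 'k) set"
  for scale where
  zero: "(\<lambda>_. 0) \<in> tensor_rel scale"
| gen: "(\<lambda>w. word (w1 @ [scale a x + y] @ w2) w - a * word (w1 @ [x] @ w2) w
              - word (w1 @ [y] @ w2) w) \<in> tensor_rel scale"
| add: "u \<in> tensor_rel scale \<Longrightarrow> v \<in> tensor_rel scale \<Longrightarrow> (\<lambda>w. u w + v w) \<in> tensor_rel scale"
| smult: "u \<in> tensor_rel scale \<Longrightarrow> (\<lambda>w. c * u w) \<in> tensor_rel scale"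

text \<open>Admissible index tuples (i1,j1,...,ik,jk), 0-based indices in {0..<p}.\<close>
definition pairings :: "nat \<Rightarrow> nat \<Rightarrow> (nat \<times> nat) list set" where
  "pairings k p = {ps. length ps = k \<and> (\<forall>(i,j)\<in>set ps. i < j \<and> j < p)
       \<and> sorted_wrt (<) (map fst ps) \<and> distinct (concat (map (\<lambda>(i,j). [i,j]) ps))}"

definition used_idx :: "(nat \<times> nat) list \<Rightarrow> nat list" where
  "used_idx ps = concat (map (\<lambda>(i,j). [i,j]) ps)"

text \<open>Sign of the permutation m \<mapsto> ws!m (ws a list enumerating {0..<length ws}),
  computed as (-1)^(number of inversions).\<close>
definition perm_list_sign :: "nat list \<Rightarrow> 'k::field" where
  "perm_list_sign ws = (-1) ^ card {(a,b). a < b \<and> b < length ws \<and> ws ! b < ws ! a}"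

definition pairing_sign :: "nat \<Rightarrow> (nat \<times> nat) list \<Rightarrow> 'k::field" where
  "pairing_sign p ps = perm_list_sign (used_idx ps @ filter (\<lambda>i. i \<notin> set (used_idx ps)) [0..<p])"

definition a_word :: "('v \<Rightarrow> 'v \<Rightarrow> 'k::field) \<Rightarrow> nat \<Rightarrow> 'v list \<Rightarrow> 'v list \<Rightarrow> 'k" where
  "a_word F k xs = (\<lambda>w. \<Sum>ps\<in>pairings k (length xs).
      if nths xs (- set (used_idx ps)) = w
      then pairing_sign (length xs) ps * (\<Prod>(i,j)\<leftarrow>ps. F (xs ! i) (xs ! j))
      else 0)"

definition a_op :: "('v \<Rightarrow> 'v \<Rightarrow> 'k::field) \<Rightarrow> nat \<Rightarrow> ('v list \<Rightarrow> 'k) \<Rightarrow> ('v list \<Rightarrow> 'k)" where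
  "a_op F k u = (\<lambda>w. \<Sum>v\<in>{v. u v \<noteq> 0}. u v * a_word F k v w)"

end

theory Submission
  imports Defs
begin

text \<open>The identity holds already for formal linear combinations of words, before passing to
  the quotient by the multilinearity relations, and for arbitrary F. Let \<open>\<iota>\<^sub>y\<close>
  (\<open>contract F y\<close>) send \<open>x\<^sub>0 ... x\<^sub>p\<^sub>-\<^sub>1\<close> to the sum over m of
  \<open>(-1)\<^sup>m F y x\<^sub>m\<close> times the word with \<open>x\<^sub>m\<close> removed. Sorting the pairings of
  \<open>y x\<^sub>0 ... x\<^sub>p\<^sub>-\<^sub>1\<close> by whether the first letter is paired gives
  \<open>a\<^sub>k\<^sub>+\<^sub>1 (y w) = y a\<^sub>k\<^sub>+\<^sub>1 w + a\<^sub>k (\<iota>\<^sub>y w)\<close>, a pair (0, m + 1) contributing the sign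
  \<open>(-1)\<^sup>m\<close>. Contractions anticommute, hence, by induction on the length of words, commute
  with every \<open>a\<^sub>l\<close>. The same induction together with Pascal's rule yields
  \<open>a\<^sub>k a\<^sub>l = C(k+l, k) a\<^sub>k\<^sub>+\<^sub>l\<close>.\<close>

section \<open>Formal linear combinations of words\<close>

definition supp :: "('v list \<Rightarrow> 'k::field) \<Rightarrow> 'v list set" where
  "supp u = {w. u w \<noteq> 0}"

definition lin_ext :: "('v list \<Rightarrow> 'v list \<Rightarrow> 'k::field) \<Rightarrow> ('v list \<Rightarrow> 'k) \<Rightarrow> 'v list \<Rightarrow> 'k" where
  "lin_ext f u = (\<lambda>w. \<Sum>v\<in>supp u. u v * f v w)"

lemma a_op_eq_lin_ext: "a_op F k = lin_ext (a_word F k)"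
  by (simp add: fun_eq_iff a_op_def lin_ext_def supp_def)

lemma fin_supp_iff: "fin_supp u \<longleftrightarrow> finite (supp u)"
  by (simp add: fin_supp_def supp_def)

lemma lin_ext_superset:
  assumes "finite T" "supp u \<subseteq> T"
  shows "lin_ext f u w = (\<Sum>v\<in>T. u v * f v w)"
  unfolding lin_ext_def by (rule sum.mono_neutral_left) (use assms in \<open>auto simp: supp_def\<close>)

lemma lin_ext_cong: "(\<And>v. v \<in> supp u \<Longrightarrow> f v = g v) \<Longrightarrow> lin_ext f u = lin_ext g u"
  unfolding lin_ext_def by (auto intro!: sum.cong)

lemma lin_ext_zero [simp]: "lin_ext f (\<lambda>_. 0) = (\<lambda>_. 0)"
  by (simp add: lin_ext_def supp_def)

lemma supp_word [simp]: "supp (word v) = {v}"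
  by (auto simp: supp_def word_def)

lemma fin_supp_word [simp]: "fin_supp (word v)"
  by (simp add: fin_supp_iff)

lemma lin_ext_word [simp]: "lin_ext f (word v) = f v"
  unfolding lin_ext_def supp_word by (simp add: word_def)

lemma lin_ext_word_id:
  assumes "fin_supp u"
  shows "lin_ext word u = u"
proof
  fix w
  have "lin_ext word u w = (\<Sum>v\<in>insert w (supp u). u v * word v w)"
    using assms by (intro lin_ext_superset) (auto simp: fin_supp_iff)
  also have "\<dots> = (\<Sum>v\<in>insert w (supp u). if v = w then u v else 0)"
    by (intro sum.cong) (auto simp: word_def)
  also have "\<dots> = u w"
    using assms by (simp add: fin_supp_iff)
  finally show "lin_ext word u w = u w" .
qed

lemma lin_ext_linear:
  assumes "fin_supp u1" "fin_supp u2"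
  shows "lin_ext f (\<lambda>w. a * u1 w + b * u2 w) = (\<lambda>w. a * lin_ext f u1 w + b * lin_ext f u2 w)"
proof
  fix w
  let ?T = "supp u1 \<union> supp u2"
  have T: "finite ?T" using assms by (simp add: fin_supp_iff)
  have "lin_ext f (\<lambda>w. a * u1 w + b * u2 w) w = (\<Sum>v\<in>?T. (a * u1 v + b * u2 v) * f v w)"
    by (rule lin_ext_superset[OF T]) (auto simp: supp_def)
  also have "\<dots> = a * (\<Sum>v\<in>?T. u1 v * f v w) + b * (\<Sum>v\<in>?T. u2 v * f v w)"
    by (simp add: sum.distrib sum_distrib_left algebra_simps)
  also have "\<dots> = a * lin_ext f u1 w + b * lin_ext f u2 w"
    using T by (simp add: lin_ext_superset[of ?T u1] lin_ext_superset[of ?T u2])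
  finally show "lin_ext f (\<lambda>w. a * u1 w + b * u2 w) w = a * lin_ext f u1 w + b * lin_ext f u2 w" .
qed

lemma lin_ext_smult: "fin_supp u \<Longrightarrow> lin_ext f (\<lambda>w. a * u w) = (\<lambda>w. a * lin_ext f u w)"
  using lin_ext_linear[of u u f a 0] by simp

lemma lin_ext_add:
  "fin_supp u1 \<Longrightarrow> fin_supp u2 \<Longrightarrow> lin_ext f (\<lambda>w. u1 w + u2 w) = (\<lambda>w. lin_ext f u1 w + lin_ext f u2 w)"
  using lin_ext_linear[of u1 u2 f 1 1] by simp

lemma lin_ext_diff:
  "fin_supp u1 \<Longrightarrow> fin_supp u2 \<Longrightarrow> lin_ext f (\<lambda>w. u1 w - u2 w) = (\<lambda>w. lin_ext f u1 w - lin_ext f u2 w)"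
  using lin_ext_linear[of u1 u2 f 1 "-1"] by simp

lemma lin_ext_uminus: "fin_supp u \<Longrightarrow> lin_ext f (\<lambda>w. - u w) = (\<lambda>w. - lin_ext f u w)"
  using lin_ext_linear[of u u f "-1" 0] by simp

lemma lin_ext_kernel_linear:
  "lin_ext (\<lambda>v w. a * f v w + b * g v w) u = (\<lambda>w. a * lin_ext f u w + b * lin_ext g u w)"
  by (simp add: fun_eq_iff lin_ext_def sum.distrib sum_distrib_left algebra_simps)

lemma lin_ext_kernel_smult: "lin_ext (\<lambda>v w. a * f v w) u = (\<lambda>w. a * lin_ext f u w)"
  using lin_ext_kernel_linear[of a f 0 f u] by simp

lemma lin_ext_kernel_add: "lin_ext (\<lambda>v w. f v w + g v w) u = (\<lambda>w. lin_ext f u w + lin_ext g u w)"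
  using lin_ext_kernel_linear[of 1 f 1 g u] by simp

lemma lin_ext_kernel_diff: "lin_ext (\<lambda>v w. f v w - g v w) u = (\<lambda>w. lin_ext f u w - lin_ext g u w)"
  using lin_ext_kernel_linear[of 1 f "-1" g u] by simp

lemma fin_supp_linear: "fin_supp u1 \<Longrightarrow> fin_supp u2 \<Longrightarrow> fin_supp (\<lambda>w. a * u1 w + b * u2 w)"
  unfolding fin_supp_def by (rule finite_subset[of _ "{w. u1 w \<noteq> 0} \<union> {w. u2 w \<noteq> 0}"]) auto

lemma fin_supp_smult: "fin_supp u \<Longrightarrow> fin_supp (\<lambda>w. a * u w)"
  using fin_supp_linear[of u u a 0] by simp

lemma fin_supp_add: "fin_supp u1 \<Longrightarrow> fin_supp u2 \<Longrightarrow> fin_supp (\<lambda>w. u1 w + u2 w)"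
  using fin_supp_linear[of u1 u2 1 1] by simp

lemma supp_lin_ext: "supp (lin_ext f u) \<subseteq> (\<Union>v\<in>supp u. supp (f v))"
  unfolding supp_def lin_ext_def by (auto elim!: sum.not_neutral_contains_not_neutral)

lemma fin_supp_lin_ext:
  assumes "fin_supp u" "\<And>v. v \<in> supp u \<Longrightarrow> fin_supp (f v)"
  shows "fin_supp (lin_ext f u)"
  using assms supp_lin_ext[of f u] unfolding fin_supp_iff by (meson finite_UN_I finite_subset)

lemma lin_ext_lin_ext:
  assumes "fin_supp u" "\<And>v. v \<in> supp u \<Longrightarrow> fin_supp (f v)"
  shows "lin_ext g (lin_ext f u) = lin_ext (\<lambda>v. lin_ext g (f v)) u"
proof
  fix w
  let ?S = "supp u"
  let ?T = "\<Union>v\<in>?S. supp (f v)"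
  have T: "finite ?T"
    using assms by (auto simp: fin_supp_iff)
  have "lin_ext g (lin_ext f u) w = (\<Sum>w'\<in>?T. (\<Sum>v\<in>?S. u v * f v w') * g w' w)"
    by (simp add: lin_ext_superset[OF T supp_lin_ext]) (simp add: lin_ext_def)
  also have "\<dots> = (\<Sum>v\<in>?S. u v * (\<Sum>w'\<in>?T. f v w' * g w' w))"
    by (simp add: sum_distrib_left sum_distrib_right mult.assoc sum.swap[of _ ?T])
  also have "\<dots> = (\<Sum>v\<in>?S. u v * lin_ext g (f v) w)"
    by (intro sum.cong refl arg_cong2[where f = "(*)"] lin_ext_superset[symmetric] T) auto
  also have "\<dots> = lin_ext (\<lambda>v. lin_ext g (f v)) u w"
    by (simp add: lin_ext_def)
  finally show "lin_ext g (lin_ext f u) w = lin_ext (\<lambda>v. lin_ext g (f v)) u w" .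
qed

lemma lin_ext_sum_words:
  assumes "finite I"
  shows "lin_ext f (\<lambda>w. \<Sum>i\<in>I. if v i = w then c i else 0) = (\<lambda>w. \<Sum>i\<in>I. c i * f (v i) w)"
proof
  fix w
  let ?u = "\<lambda>w. \<Sum>i\<in>I. if v i = w then c i else 0"
  have "supp ?u \<subseteq> v ` I"
    by (auto simp: supp_def elim!: sum.not_neutral_contains_not_neutral split: if_splits)
  then have "lin_ext f ?u w = (\<Sum>x\<in>v ` I. ?u x * f x w)"
    using assms by (intro lin_ext_superset) auto
  also have "\<dots> = (\<Sum>x\<in>v ` I. \<Sum>i\<in>{i\<in>I. v i = x}. c i * f (v i) w)"
    using assms by (intro sum.cong refl) (auto simp: sum.inter_filter sum_distrib_right intro!: sum.cong)
  also have "\<dots> = (\<Sum>i\<in>I. c i * f (v i) w)"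
    by (rule sum.image_gen[symmetric]) (rule assms)
  finally show "lin_ext f ?u w = (\<Sum>i\<in>I. c i * f (v i) w)" .
qed

section \<open>Left multiplication and contraction\<close>

definition lmult :: "'v \<Rightarrow> ('v list \<Rightarrow> 'k::field) \<Rightarrow> 'v list \<Rightarrow> 'k" where
  "lmult y u = (\<lambda>w. case w of [] \<Rightarrow> 0 | z # w' \<Rightarrow> if z = y then u w' else 0)"

lemma supp_lmult: "supp (lmult y u) = Cons y ` supp u"
proof (rule set_eqI)
  fix w show "w \<in> supp (lmult y u) \<longleftrightarrow> w \<in> Cons y ` supp u"
    by (cases w) (auto simp: supp_def lmult_def)
qed

lemma fin_supp_lmult [simp]: "fin_supp u \<Longrightarrow> fin_supp (lmult y u)"
  by (simp add: fin_supp_iff supp_lmult)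

lemma lin_ext_lmult: "lin_ext g (lmult y u) = lin_ext (\<lambda>v. g (y # v)) u"
proof
  fix w
  have "lin_ext g (lmult y u) w = (\<Sum>v\<in>Cons y ` supp u. lmult y u v * g v w)"
    by (simp add: lin_ext_def supp_lmult)
  also have "\<dots> = (\<Sum>v\<in>supp u. u v * g (y # v) w)"
    by (subst sum.reindex) (auto simp: lmult_def)
  finally show "lin_ext g (lmult y u) w = lin_ext (\<lambda>v. g (y # v)) u w"
    by (simp add: lin_ext_def)
qed

lemma lmult_lin_ext: "lmult y (lin_ext f u) = lin_ext (\<lambda>v. lmult y (f v)) u"
  by (auto simp: fun_eq_iff lmult_def lin_ext_def split: list.splits)

lemma lmult_linear: "lmult y (\<lambda>w. a * u1 w + b * u2 w) = (\<lambda>w. a * lmult y u1 w + b * lmult y u2 w)"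
  by (auto simp: fun_eq_iff lmult_def split: list.splits)

lemma lmult_smult: "lmult y (\<lambda>w. a * u w) = (\<lambda>w. a * lmult y u w)"
  using lmult_linear[of y a u 0 u] by simp

lemma lmult_uminus: "lmult y (\<lambda>w. - u w) = (\<lambda>w. - lmult y u w)"
  using lmult_linear[of y "-1" u 0 u] by simp

lemma lmult_sum: "lmult y (\<lambda>w. \<Sum>i\<in>I. u i w) = (\<lambda>w. \<Sum>i\<in>I. lmult y (u i) w)"
  by (auto simp: fun_eq_iff lmult_def split: list.splits)

definition remove_nth :: "nat \<Rightarrow> 'a list \<Rightarrow> 'a list" where
  "remove_nth m xs = take m xs @ drop (Suc m) xs"

lemma length_remove_nth: "m < length xs \<Longrightarrow> length (remove_nth m xs) = length xs - 1"
  by (simp add: remove_nth_def)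

definition contract :: "('v \<Rightarrow> 'v \<Rightarrow> 'k::field) \<Rightarrow> 'v \<Rightarrow> 'v list \<Rightarrow> 'v list \<Rightarrow> 'k" where
  "contract F x ys =
     (\<lambda>w. \<Sum>m<length ys. if remove_nth m ys = w then (-1) ^ m * F x (ys ! m) else 0)"

lemma supp_contract: "supp (contract F x ys) \<subseteq> (\<lambda>m. remove_nth m ys) ` {..<length ys}"
  by (auto simp: supp_def contract_def elim!: sum.not_neutral_contains_not_neutral split: if_splits)

lemma fin_supp_contract [simp]: "fin_supp (contract F x ys)"
  unfolding fin_supp_iff by (rule finite_subset[OF supp_contract]) auto

lemma length_supp_contract: "v \<in> supp (contract F x ys) \<Longrightarrow> length v < length ys"
  using supp_contract[of F x ys] by (auto simp: length_remove_nth)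

lemma contract_Nil [simp]: "contract F x [] = (\<lambda>_. 0)"
  by (simp add: contract_def fun_eq_iff)

lemma contract_Cons: "contract F x (z # zs) = (\<lambda>w. F x z * word zs w - lmult z (contract F x zs) w)"
proof
  fix w
  have remove: "remove_nth 0 (z # zs) = zs" "remove_nth (Suc m) (z # zs) = z # remove_nth m zs" for m
    by (simp_all add: remove_nth_def)
  have "contract F x (z # zs) w = (if zs = w then F x z else 0) +
      (\<Sum>m<length zs. if z # remove_nth m zs = w then - ((-1) ^ m * F x (zs ! m)) else 0)"
    unfolding contract_def by (simp only: length_Cons sum.lessThan_Suc_shift remove nth_Cons_0
        nth_Cons_Suc power_Suc) (auto intro!: sum.cong)
  also have "(\<Sum>m<length zs. if z # remove_nth m zs = w then - ((-1) ^ m * F x (zs ! m)) else 0)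
      = - lmult z (contract F x zs) w"
    by (cases w) (auto simp: lmult_def contract_def sum_negf[symmetric] intro!: sum.cong)
  finally show "contract F x (z # zs) w = F x z * word zs w - lmult z (contract F x zs) w"
    by (simp add: word_def eq_commute)
qed

lemma lin_ext_contract_lmult:
  assumes "fin_supp u"
  shows "lin_ext (contract F x) (lmult z u) = (\<lambda>w. F x z * u w - lmult z (lin_ext (contract F x) u) w)"
  using assms by (simp add: lin_ext_lmult contract_Cons lin_ext_kernel_diff lin_ext_kernel_smult
      lin_ext_word_id lmult_lin_ext)

lemma contract_anticomm:
  "lin_ext (contract F x) (contract F y ys) = (\<lambda>w. - lin_ext (contract F y) (contract F x ys) w)"
proof (induction ys arbitrary: x y)
  case Nil
  then show ?case by simp
next
  case (Cons z zs)
  have "lin_ext (contract F x) (contract F y (z # zs)) = (\<lambda>w. F y z * contract F x zs w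
      - (F x z * contract F y zs w - lmult z (lin_ext (contract F x) (contract F y zs)) w))"
    and "lin_ext (contract F y) (contract F x (z # zs)) = (\<lambda>w. F x z * contract F y zs w
      - (F y z * contract F x zs w - lmult z (lin_ext (contract F y) (contract F x zs)) w))"
    by (simp_all add: contract_Cons lin_ext_diff fin_supp_smult lin_ext_smult lin_ext_contract_lmult)
  then show ?case
    by (simp add: Cons.IH[of x y] lmult_uminus fun_eq_iff)
qed

section \<open>Signs and pairings\<close>

definition inversions :: "nat list \<Rightarrow> (nat \<times> nat) set" where
  "inversions ws = {(a, b). a < b \<and> b < length ws \<and> ws ! b < ws ! a}"

lemma perm_list_sign_inversions: "perm_list_sign ws = (-1) ^ card (inversions ws)"
  by (simp add: perm_list_sign_def inversions_def)

lemma finite_inversions: "finite (inversions ws)"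
  by (rule finite_subset[of _ "{..<length ws} \<times> {..<length ws}"]) (auto simp: inversions_def)

lemma inversions_Cons: "inversions (a # ws) =
    (\<lambda>j. (0, Suc j)) ` {j. j < length ws \<and> ws ! j < a} \<union> map_prod Suc Suc ` inversions ws"
proof (rule set_eqI)
  fix x :: "nat \<times> nat"
  obtain i j where x: "x = (i, j)" by (cases x)
  show "x \<in> inversions (a # ws) \<longleftrightarrow>
      x \<in> (\<lambda>j. (0, Suc j)) ` {j. j < length ws \<and> ws ! j < a} \<union> map_prod Suc Suc ` inversions ws"
    unfolding x by (cases i; cases j) (auto simp: inversions_def)
qed

lemma perm_list_sign_Cons:
  "perm_list_sign (a # ws) = (-1) ^ length (filter (\<lambda>x. x < a) ws) * perm_list_sign ws"
proof -
  have "inj_on (map_prod Suc Suc) (inversions ws)"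
    by (rule inj_on_subset[OF prod.inj_map]) (simp_all add: inj_Suc)
  then have "card (inversions (a # ws)) = card {j. j < length ws \<and> ws ! j < a} + card (inversions ws)"
    unfolding inversions_Cons
    by (subst card_Un_disjoint) (auto simp: finite_inversions card_image inj_on_def[of "\<lambda>j. (0, Suc j)"])
  then show ?thesis
    by (simp add: perm_list_sign_inversions length_filter_conv_card power_add)
qed

lemma perm_list_sign_map_strict_mono: "strict_mono g \<Longrightarrow> perm_list_sign (map g ws) = perm_list_sign ws"
  unfolding perm_list_sign_inversions
  by (rule arg_cong[where f = "\<lambda>n. (-1) ^ card n"]) (auto simp: inversions_def strict_mono_less)

lemma perm_list_sign_insert_0:
  "perm_list_sign (map Suc as @ 0 # map Suc bs) = (-1) ^ length as * perm_list_sign (as @ bs)"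
proof (induction as)
  case Nil
  then show ?case by (simp add: perm_list_sign_Cons perm_list_sign_map_strict_mono strict_mono_Suc_iff)
next
  case (Cons a as)
  have "length (filter (\<lambda>x. x < Suc a) (map Suc as @ 0 # map Suc bs))
      = Suc (length (filter (\<lambda>x. x < a) (as @ bs)))"
    by (simp add: filter_map o_def)
  then show ?case
    by (simp add: perm_list_sign_Cons Cons.IH)
qed

lemma perm_list_sign_upt: "perm_list_sign [0..<p] = 1"
proof -
  have "inversions [0..<p] = {}"
    by (auto simp: inversions_def)
  then show ?thesis
    by (simp add: perm_list_sign_inversions)
qed

lemma used_idx_Nil [simp]: "used_idx [] = []"
  by (simp add: used_idx_def)

lemma used_idx_Cons [simp]: "used_idx ((i, j) # ps) = i # j # used_idx ps"
  by (simp add: used_idx_def)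

lemma used_idx_map: "used_idx (map (map_prod h h) ps) = map h (used_idx ps)"
  by (induction ps) auto

lemma set_used_idx: "set (used_idx ps) = fst ` set ps \<union> snd ` set ps"
  by (induction ps) force+

lemma length_used_idx: "length (used_idx ps) = 2 * length ps"
  by (induction ps) auto

definition unused_idx :: "nat \<Rightarrow> (nat \<times> nat) list \<Rightarrow> nat list" where
  "unused_idx p ps = filter (\<lambda>i. i \<notin> set (used_idx ps)) [0..<p]"

lemma pairing_sign_unused_idx: "pairing_sign p ps = perm_list_sign (used_idx ps @ unused_idx p ps)"
  by (simp add: pairing_sign_def unused_idx_def)

lemma nths_eq_map_nth: "nths xs A = map (nth xs) (filter (\<lambda>i. i \<in> A) [0..<length xs])"
proof (induction xs arbitrary: A)
  case Nil
  then show ?case by simp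
next
  case (Cons x xs)
  have "[0..<length (x # xs)] = 0 # map Suc [0..<length xs]"
    by (simp add: upt_conv_Cons map_Suc_upt del: upt_Suc)
  then show ?case
    by (simp add: nths_Cons Cons.IH filter_map o_def)
qed

lemma nths_unused_idx: "nths xs (- set (used_idx ps)) = map (nth xs) (unused_idx (length xs) ps)"
  by (simp add: nths_eq_map_nth unused_idx_def)

lemma pairings_conv_used_idx: "pairings k p = {ps. length ps = k \<and> (\<forall>(i, j)\<in>set ps. i < j \<and> j < p)
    \<and> sorted_wrt (<) (map fst ps) \<and> distinct (used_idx ps)}"
  by (simp add: pairings_def used_idx_def)

lemma pairings_0 [simp]: "pairings 0 p = {[]}"
  by (auto simp: pairings_conv_used_idx)

lemma Cons_in_pairings_iff: "(i, j) # ps \<in> pairings (Suc k) p \<longleftrightarrow>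
    i < j \<and> j < p \<and> ps \<in> pairings k p \<and> (\<forall>x\<in>set ps. i < fst x) \<and>
    i \<notin> set (used_idx ps) \<and> j \<notin> set (used_idx ps)"
  by (auto simp: pairings_conv_used_idx)

lemma pairings_Suc_0 [simp]: "pairings (Suc k) 0 = {}"
  by (fastforce simp: pairings_def length_Suc_conv)

lemma used_idx_less: "ps \<in> pairings k p \<Longrightarrow> a \<in> set (used_idx ps) \<Longrightarrow> a < p"
  by (auto simp: pairings_conv_used_idx set_used_idx)

lemma distinct_used_idx: "ps \<in> pairings k p \<Longrightarrow> distinct (used_idx ps)"
  by (simp add: pairings_conv_used_idx)

lemma finite_pairings: "finite (pairings k p)"
proof (rule finite_subset)
  show "pairings k p \<subseteq> {ps. set ps \<subseteq> {0..<p} \<times> {0..<p} \<and> length ps = k}"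
    by (auto simp: pairings_conv_used_idx)
  show "finite {ps. set ps \<subseteq> {0..<p} \<times> {0..<p} \<and> length ps = k}"
    by (rule finite_lists_length_eq) auto
qed

lemma distinct_used_unused_idx:
  "ps \<in> pairings k p \<Longrightarrow> distinct (used_idx ps @ unused_idx p ps)"
  by (auto simp: unused_idx_def distinct_used_idx)

lemma set_used_unused_idx:
  "ps \<in> pairings k p \<Longrightarrow> set (used_idx ps @ unused_idx p ps) = {0..<p}"
  by (auto simp: unused_idx_def dest: used_idx_less)

lemma pairings_head_least:
  assumes "(i, j) # ps \<in> pairings (Suc k) p" "a \<in> set (used_idx ((i, j) # ps))"
  shows "i \<le> a"
  using assms by (fastforce simp: Cons_in_pairings_iff pairings_conv_used_idx set_used_idx)

lemma map_in_pairings: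
  assumes "ps \<in> pairings k p"
    and mono: "\<And>a b. a \<in> set (used_idx ps) \<Longrightarrow> b \<in> set (used_idx ps) \<Longrightarrow> a < b \<Longrightarrow> h a < h b"
    and bound: "\<And>a. a \<in> set (used_idx ps) \<Longrightarrow> h a < p'"
  shows "map (map_prod h h) ps \<in> pairings k p'"
proof -
  have used: "fst x \<in> set (used_idx ps)" "snd x \<in> set (used_idx ps)" if "x \<in> set ps" for x
    using that by (auto simp: set_used_idx)
  have "inj_on h (set (used_idx ps))"
    by (rule inj_onI) (metis mono linorder_neqE_nat less_irrefl)
  then have "distinct (map h (used_idx ps))"
    using assms(1) by (simp add: pairings_conv_used_idx distinct_map)
  moreover have "sorted_wrt (<) (map (h \<circ> fst) ps)"
    using assms(1) by (auto simp: pairings_conv_used_idx sorted_wrt_map intro!: mono used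
        elim!: sorted_wrt_mono_rel[rotated])
  moreover have "h i < h j \<and> h j < p'" if "(i, j) \<in> set ps" for i j
    using assms(1) that used[OF that] by (auto simp: pairings_conv_used_idx intro: mono bound)
  ultimately show ?thesis
    using assms(1) by (auto simp: pairings_conv_used_idx used_idx_map o_def)
qed

lemma pairings_avoiding_0:
  "map (map_prod Suc Suc) ` pairings k p = {ps \<in> pairings k (Suc p). 0 \<notin> set (used_idx ps)}"
proof (intro set_eqI iffI)
  fix ps assume "ps \<in> map (map_prod Suc Suc) ` pairings k p"
  then obtain qs where qs: "qs \<in> pairings k p" "ps = map (map_prod Suc Suc) qs" by blast
  have "map (map_prod Suc Suc) qs \<in> pairings k (Suc p)"
    by (rule map_in_pairings[OF qs(1)]) (auto dest: used_idx_less[OF qs(1)])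
  then show "ps \<in> {ps \<in> pairings k (Suc p). 0 \<notin> set (used_idx ps)}"
    using qs by (auto simp: used_idx_map)
next
  fix ps assume ps: "ps \<in> {ps \<in> pairings k (Suc p). 0 \<notin> set (used_idx ps)}"
  let ?qs = "map (map_prod (\<lambda>c. c - 1) (\<lambda>c. c - 1)) ps"
  have pos: "a \<noteq> 0" if "a \<in> set (used_idx ps)" for a
    using that ps by (metis (mono_tags, lifting) mem_Collect_eq)
  have "?qs \<in> pairings k p"
    by (rule map_in_pairings) (use ps pos used_idx_less in \<open>force+\<close>)
  moreover have "map (map_prod Suc Suc) ?qs = ps"
    unfolding map_map
  proof (rule map_idI)
    fix x assume "x \<in> set ps"
    then have "fst x \<in> set (used_idx ps)" "snd x \<in> set (used_idx ps)"
      by (auto simp: set_used_idx)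
    then show "(map_prod Suc Suc \<circ> map_prod (\<lambda>c. c - 1) (\<lambda>c. c - 1)) x = x"
      using pos by (cases x) fastforce
  qed
  ultimately show "ps \<in> map (map_prod Suc Suc) ` pairings k p"
    by (metis image_eqI)
qed

lemma unused_idx_shift: "unused_idx (Suc p) (map (map_prod Suc Suc) ps) = 0 # map Suc (unused_idx p ps)"
proof -
  have "[0..<Suc p] = 0 # map Suc [0..<p]"
    by (simp add: upt_conv_Cons map_Suc_upt del: upt_Suc)
  then show ?thesis
    by (simp add: unused_idx_def used_idx_map filter_map o_def image_iff del: upt_Suc)
      (auto intro!: filter_cong)
qed

lemma pairing_sign_shift: "pairing_sign (Suc p) (map (map_prod Suc Suc) ps) = pairing_sign p ps"
  by (simp add: pairing_sign_unused_idx used_idx_map unused_idx_shift perm_list_sign_insert_0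
      length_used_idx)

text \<open>\<open>skip_two m\<close> enumerates the naturals other than 0 and m + 1 in increasing order;
  \<open>unskip_two m\<close> inverts it on that range.\<close>
definition skip_two :: "nat \<Rightarrow> nat \<Rightarrow> nat" where
  "skip_two m c = (if c < m then Suc c else Suc (Suc c))"

definition unskip_two :: "nat \<Rightarrow> nat \<Rightarrow> nat" where
  "unskip_two m c = (if c \<le> m then c - 1 else c - 2)"

lemma strict_mono_skip_two: "strict_mono (skip_two m)"
  by (rule strict_monoI) (auto simp: skip_two_def)

lemma inj_skip_two: "inj (skip_two m)"
  using strict_mono_skip_two strict_mono_imp_inj_on by blast

lemma skip_two_neq [simp]: "skip_two m c \<noteq> 0" "skip_two m c \<noteq> Suc m" "Suc m \<noteq> skip_two m c"
  by (auto simp: skip_two_def)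

lemma skip_two_less_Suc_iff: "skip_two m c < Suc m \<longleftrightarrow> c < m"
  by (auto simp: skip_two_def)

lemma skip_two_unskip_two: "c \<noteq> 0 \<Longrightarrow> c \<noteq> Suc m \<Longrightarrow> skip_two m (unskip_two m c) = c"
  by (auto simp: skip_two_def unskip_two_def)

lemma nth_skip_two:
  "m < length ys \<Longrightarrow> c < length ys - 1 \<Longrightarrow> (y # ys) ! skip_two m c = remove_nth m ys ! c"
  by (auto simp: skip_two_def remove_nth_def nth_append min_def)

definition pair_head :: "nat \<Rightarrow> (nat \<times> nat) list \<Rightarrow> (nat \<times> nat) list" where
  "pair_head m qs = (0, Suc m) # map (map_prod (skip_two m) (skip_two m)) qs"

lemma inj_on_pair_head: "inj_on (\<lambda>(m, qs). pair_head m qs) A"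
proof (rule inj_onI, clarify)
  fix m qs m' qs' assume eq: "pair_head m qs = pair_head m' qs'"
  then have m: "m = m'"
    by (simp add: pair_head_def)
  have "inj (map_prod (skip_two m) (skip_two m))"
    by (simp add: prod.inj_map inj_skip_two)
  then show "m = m' \<and> qs = qs'"
    using eq m by (simp add: pair_head_def)
qed

lemma pair_head_in_pairings:
  assumes "m < p" "qs \<in> pairings k (p - 1)"
  shows "pair_head m qs \<in> pairings (Suc k) (Suc p)"
proof -
  have "map (map_prod (skip_two m) (skip_two m)) qs \<in> pairings k (Suc p)"
  proof (rule map_in_pairings[OF assms(2)])
    show "skip_two m a < skip_two m b" if "a < b" for a b
      using strict_mono_skip_two that by (simp add: strict_mono_less)
    show "skip_two m a < Suc p" if "a \<in> set (used_idx qs)" for a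
      using used_idx_less[OF assms(2) that] by (auto simp: skip_two_def)
  qed
  moreover have "0 < fst x" if "x \<in> set (map (map_prod (skip_two m) (skip_two m)) qs)" for x
    using that by (auto simp: skip_two_def)
  ultimately show ?thesis
    using assms(1) by (auto simp: pair_head_def Cons_in_pairings_iff used_idx_map)
qed

lemma pairing_avoiding_0_Suc:
  assumes rs: "rs \<in> pairings k (Suc p)" and m: "m < p"
    and unused: "0 \<notin> set (used_idx rs)" "Suc m \<notin> set (used_idx rs)"
  shows "map (map_prod (unskip_two m) (unskip_two m)) rs \<in> pairings k (p - 1)"
    and "map (map_prod (skip_two m) (skip_two m)) (map (map_prod (unskip_two m) (unskip_two m)) rs) = rs"
proof -
  have pos: "a \<noteq> 0" and ne: "a \<noteq> Suc m" if "a \<in> set (used_idx rs)" for a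
    using that unused by metis+
  show "map (map_prod (unskip_two m) (unskip_two m)) rs \<in> pairings k (p - 1)"
  proof (rule map_in_pairings[OF rs])
    fix a b assume a: "a \<in> set (used_idx rs)" and b: "b \<in> set (used_idx rs)" and "a < b"
    then show "unskip_two m a < unskip_two m b"
      using pos[OF a] pos[OF b] ne[OF a] ne[OF b] by (auto simp: unskip_two_def)
  next
    fix a assume "a \<in> set (used_idx rs)"
    then show "unskip_two m a < p - 1"
      using pos ne used_idx_less[OF rs] m by (fastforce simp: unskip_two_def)
  qed
  show "map (map_prod (skip_two m) (skip_two m)) (map (map_prod (unskip_two m) (unskip_two m)) rs) = rs"
    unfolding map_map
  proof (rule map_idI)
    fix x assume "x \<in> set rs"
    then have "fst x \<in> set (used_idx rs)" "snd x \<in> set (used_idx rs)"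
      by (auto simp: set_used_idx)
    then show "(map_prod (skip_two m) (skip_two m) \<circ> map_prod (unskip_two m) (unskip_two m)) x = x"
      using pos ne by (cases x) (auto simp: skip_two_unskip_two)
  qed
qed

lemma pairing_using_0_is_pair_head:
  assumes ps: "ps \<in> pairings (Suc k) (Suc p)" "0 \<in> set (used_idx ps)"
  obtains m qs where "m < p" "qs \<in> pairings k (p - 1)" "ps = pair_head m qs"
proof -
  obtain i j rs where ps_eq: "ps = (i, j) # rs"
    using ps by (cases ps) auto
  have ij: "i < j" "j < Suc p" and rs: "rs \<in> pairings k (Suc p)"
    and unused: "i \<notin> set (used_idx rs)" "j \<notin> set (used_idx rs)"
    using ps(1) unfolding ps_eq Cons_in_pairings_iff by auto
  have "i = 0"
    using pairings_head_least ps unfolding ps_eq by fastforce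
  then obtain m where i: "i = 0" and j: "j = Suc m" and m: "m < p"
    using ij by (cases j) auto
  show thesis
    using pairing_avoiding_0_Suc[OF rs m unused[unfolded i j]] that[OF m]
    by (simp add: ps_eq i j pair_head_def)
qed

lemma pairings_using_0:
  "(\<lambda>(m, qs). pair_head m qs) ` (SIGMA m:{..<p}. pairings k (p - 1))
    = {ps \<in> pairings (Suc k) (Suc p). 0 \<in> set (used_idx ps)}"
  by (auto simp: pair_head_in_pairings elim!: pairing_using_0_is_pair_head)
    (auto simp: pair_head_def)

lemma unused_idx_pair_head:
  assumes "m < p" "qs \<in> pairings k (p - 1)"
  shows "unused_idx (Suc p) (pair_head m qs) = map (skip_two m) (unused_idx (p - 1) qs)"
proof (rule sorted_distinct_set_unique)
  have "sorted (unused_idx (p - 1) qs)"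
    by (simp add: unused_idx_def sorted_wrt_filter del: upt_Suc)
  then show "sorted (map (skip_two m) (unused_idx (p - 1) qs))"
    unfolding sorted_map
    by (rule sorted_wrt_mono_rel[rotated]) (simp add: strict_mono_skip_two strict_mono_less_eq)
  show "distinct (map (skip_two m) (unused_idx (p - 1) qs))"
    using inj_skip_two[of m] by (simp add: unused_idx_def distinct_map inj_on_subset[of _ UNIV])
  show "set (unused_idx (Suc p) (pair_head m qs)) = set (map (skip_two m) (unused_idx (p - 1) qs))"
  proof (intro set_eqI iffI)
    fix x assume "x \<in> set (unused_idx (Suc p) (pair_head m qs))"
    then have x: "x < Suc p" "x \<noteq> 0" "x \<noteq> Suc m" "x \<notin> skip_two m ` set (used_idx qs)"
      by (auto simp: unused_idx_def pair_head_def used_idx_map simp del: upt_Suc)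
    have "unskip_two m x \<notin> set (used_idx qs)"
      using x(4) skip_two_unskip_two[OF x(2,3)] by (metis image_eqI)
    moreover have "unskip_two m x < p - 1"
      using x assms(1) by (auto simp: unskip_two_def)
    ultimately have "unskip_two m x \<in> set (unused_idx (p - 1) qs)"
      by (simp add: unused_idx_def)
    then show "x \<in> set (map (skip_two m) (unused_idx (p - 1) qs))"
      using skip_two_unskip_two[OF x(2,3)] by (metis image_eqI set_map)
  next
    fix x assume "x \<in> set (map (skip_two m) (unused_idx (p - 1) qs))"
    then obtain c where "x = skip_two m c" "c < p - 1" "c \<notin> set (used_idx qs)"
      by (auto simp: unused_idx_def)
    then show "x \<in> set (unused_idx (Suc p) (pair_head m qs))"
      using inj_skip_two[of m]
      by (auto simp: unused_idx_def pair_head_def used_idx_map skip_two_def inj_image_mem_iff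
          simp del: upt_Suc)
  qed
qed (simp_all add: unused_idx_def sorted_wrt_filter del: upt_Suc)

lemma pairing_sign_pair_head:
  assumes m: "m < p" and qs: "qs \<in> pairings k (p - 1)"
  shows "pairing_sign (Suc p) (pair_head m qs) = (-1) ^ m * pairing_sign (p - 1) qs"
proof -
  let ?L = "used_idx qs @ unused_idx (p - 1) qs"
  have "pairing_sign (Suc p) (pair_head m qs) = perm_list_sign (0 # Suc m # map (skip_two m) ?L)"
    by (simp add: pairing_sign_unused_idx unused_idx_pair_head[OF m qs])
      (simp add: pair_head_def used_idx_map)
  also have "\<dots> = (-1) ^ length (filter (\<lambda>c. c < Suc m) (map (skip_two m) ?L))
      * perm_list_sign (map (skip_two m) ?L)"
    by (simp only: perm_list_sign_Cons) simp
  also have "perm_list_sign (map (skip_two m) ?L) = perm_list_sign ?L"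
    by (rule perm_list_sign_map_strict_mono[OF strict_mono_skip_two])
  also have "length (filter (\<lambda>c. c < Suc m) (map (skip_two m) ?L)) = length (filter (\<lambda>c. c < m) ?L)"
    by (simp add: filter_map o_def skip_two_less_Suc_iff)
  also have "length (filter (\<lambda>c. c < m) ?L) = card ({c. c < m} \<inter> set ?L)"
    by (rule distinct_length_filter) (rule distinct_used_unused_idx[OF qs])
  also have "{c. c < m} \<inter> set ?L = {..<m}"
    using set_used_unused_idx[OF qs] m by auto
  finally show ?thesis
    by (simp add: pairing_sign_unused_idx)
qed

section \<open>The recursion for a_word\<close>

definition pairing_term :: "('v \<Rightarrow> 'v \<Rightarrow> 'k::field) \<Rightarrow> 'v list \<Rightarrow> (nat \<times> nat) list \<Rightarrow> 'v list \<Rightarrow> 'k" where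
  "pairing_term F xs ps = (\<lambda>w. if nths xs (- set (used_idx ps)) = w
     then pairing_sign (length xs) ps * (\<Prod>(i, j)\<leftarrow>ps. F (xs ! i) (xs ! j)) else 0)"

lemma a_word_eq_sum_pairing_term:
  "a_word F k xs w = (\<Sum>ps\<in>pairings k (length xs). pairing_term F xs ps w)"
  by (simp add: a_word_def pairing_term_def)

lemma a_word_0: "a_word F 0 xs = word xs"
  by (auto simp: a_word_def fun_eq_iff word_def pairing_sign_def perm_list_sign_upt nths_all)

lemma a_word_Suc_Nil: "a_word F (Suc k) [] = (\<lambda>_. 0)"
  by (simp add: a_word_def fun_eq_iff)

lemma pairing_term_shift:
  "pairing_term F (y # ys) (map (map_prod Suc Suc) ps) = lmult y (pairing_term F ys ps)"
proof -
  have "nths (y # ys) (- set (used_idx (map (map_prod Suc Suc) ps))) = y # nths ys (- set (used_idx ps))"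
    by (simp add: nths_unused_idx unused_idx_shift)
  moreover have "(\<Prod>(i, j)\<leftarrow>map (map_prod Suc Suc) ps. F ((y # ys) ! i) ((y # ys) ! j))
      = (\<Prod>(i, j)\<leftarrow>ps. F (ys ! i) (ys ! j))"
    by (simp add: o_def split_def)
  ultimately show ?thesis
    by (auto simp: fun_eq_iff pairing_term_def lmult_def pairing_sign_shift split: list.split)
qed

lemma pairing_term_pair_head:
  assumes m: "m < length ys" and qs: "qs \<in> pairings k (length ys - 1)"
  shows "pairing_term F (y # ys) (pair_head m qs)
    = (\<lambda>w. (-1) ^ m * F y (ys ! m) * pairing_term F (remove_nth m ys) qs w)"
proof -
  have length: "length (remove_nth m ys) = length ys - 1"
    using m by (simp add: length_remove_nth)
  have nth: "(y # ys) ! skip_two m c = remove_nth m ys ! c" if "c < length ys - 1" for c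
    using nth_skip_two[OF m that] .
  have "nths (y # ys) (- set (used_idx (pair_head m qs)))
      = map ((!) (y # ys)) (map (skip_two m) (unused_idx (length ys - 1) qs))"
    by (simp add: nths_unused_idx unused_idx_pair_head[OF m qs] del: map_map)
  also have "\<dots> = nths (remove_nth m ys) (- set (used_idx qs))"
    by (auto simp: nths_unused_idx length unused_idx_def nth)
  finally have nths: "nths (y # ys) (- set (used_idx (pair_head m qs)))
      = nths (remove_nth m ys) (- set (used_idx qs))" .
  have "map (\<lambda>(i, j). F ((y # ys) ! i) ((y # ys) ! j)) (map (map_prod (skip_two m) (skip_two m)) qs)
      = map (\<lambda>(i, j). F (remove_nth m ys ! i) (remove_nth m ys ! j)) qs"
    using qs by (auto simp: pairings_conv_used_idx nth)
  then have prod: "(\<Prod>(i, j)\<leftarrow>pair_head m qs. F ((y # ys) ! i) ((y # ys) ! j))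
      = F y (ys ! m) * (\<Prod>(i, j)\<leftarrow>qs. F (remove_nth m ys ! i) (remove_nth m ys ! j))"
    by (simp only: pair_head_def prod.case list.map prod_list.Cons nth_Cons_0 nth_Cons_Suc)
  show ?thesis
    by (simp add: fun_eq_iff pairing_term_def nths prod length pairing_sign_pair_head[OF m qs])
qed

lemma a_word_Cons:
  "a_word F (Suc k) (y # ys) = (\<lambda>w. lmult y (a_word F (Suc k) ys) w + lin_ext (a_word F k) (contract F y ys) w)"
proof
  fix w
  let ?p = "length ys"
  let ?T = "\<lambda>ps. pairing_term F (y # ys) ps w"
  let ?A = "{ps \<in> pairings (Suc k) (Suc ?p). 0 \<notin> set (used_idx ps)}"
  let ?B = "{ps \<in> pairings (Suc k) (Suc ?p). 0 \<in> set (used_idx ps)}"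
  have "a_word F (Suc k) (y # ys) w = sum ?T ?A + sum ?T ?B"
    unfolding a_word_eq_sum_pairing_term
    by (subst sum.union_disjoint[symmetric]) (auto intro: finite_subset[OF _ finite_pairings] sum.cong)
  also have "sum ?T ?A = lmult y (a_word F (Suc k) ys) w"
  proof -
    have "inj (map (map_prod Suc Suc :: nat \<times> nat \<Rightarrow> _))"
      by (simp add: prod.inj_map)
    then have "sum ?T ?A = (\<Sum>ps\<in>pairings (Suc k) ?p. lmult y (pairing_term F ys ps) w)"
      by (simp add: pairings_avoiding_0[symmetric] sum.reindex inj_on_subset[of _ UNIV]
          pairing_term_shift)
    then show ?thesis
      by (simp add: lmult_sum fun_eq_iff a_word_eq_sum_pairing_term[abs_def])
  qed
  also have "sum ?T ?B = sum (?T \<circ> (\<lambda>(m, qs). pair_head m qs)) (SIGMA m:{..<?p}. pairings k (?p - 1))"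
    unfolding pairings_using_0[symmetric] by (rule sum.reindex[OF inj_on_pair_head])
  also have "\<dots> = (\<Sum>m<?p. \<Sum>qs\<in>pairings k (?p - 1). ?T (pair_head m qs))"
    by (subst sum.Sigma) (auto simp: finite_pairings split_def)
  also have "\<dots> = (\<Sum>m<?p. (-1) ^ m * F y (ys ! m) * a_word F k (remove_nth m ys) w)"
    by (intro sum.cong refl)
      (simp add: pairing_term_pair_head a_word_eq_sum_pairing_term length_remove_nth sum_distrib_left)
  also have "\<dots> = lin_ext (a_word F k) (contract F y ys) w"
    unfolding contract_def by (subst lin_ext_sum_words) (auto simp: mult.assoc)
  finally show "a_word F (Suc k) (y # ys) w
      = lmult y (a_word F (Suc k) ys) w + lin_ext (a_word F k) (contract F y ys) w" .
qed

section \<open>Commutation and composition\<close>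

lemma fin_supp_a_word [simp]: "fin_supp (a_word F k xs)"
proof (induction k arbitrary: xs)
  case 0
  then show ?case by (simp add: a_word_0)
next
  case (Suc k)
  show ?case
    by (induction xs)
      (simp add: a_word_Suc_Nil fin_supp_def, simp add: a_word_Cons fin_supp_add fin_supp_lin_ext Suc.IH)
qed

lemma lin_ext_a_word_lmult:
  assumes "fin_supp u"
  shows "lin_ext (a_word F (Suc k)) (lmult y u)
    = (\<lambda>w. lmult y (lin_ext (a_word F (Suc k)) u) w + lin_ext (a_word F k) (lin_ext (contract F y) u) w)"
  using assms by (simp add: lin_ext_lmult a_word_Cons lin_ext_kernel_add lmult_lin_ext lin_ext_lin_ext)

lemma contract_a_word_comm:
  "lin_ext (contract F x) (a_word F l ys) = lin_ext (a_word F l) (contract F x ys)"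
proof (induction ys arbitrary: x l rule: length_induct)
  case (1 ys)
  show ?case
  proof (cases "l = 0 \<or> ys = []")
    case True
    then show ?thesis
      by (cases l) (auto simp: a_word_0 lin_ext_word_id a_word_Suc_Nil)
  next
    case False
    then obtain l' y zs where l: "l = Suc l'" and ys: "ys = y # zs"
      by (auto simp: gr0_conv_Suc neq_Nil_conv)
    have IH: "lin_ext (contract F x') (a_word F l'' v) = lin_ext (a_word F l'') (contract F x' v)"
      if "length v \<le> length zs" for x' l'' v
      using 1 that ys by simp
    have swap: "lin_ext (contract F x) (lin_ext (a_word F l') (contract F y zs))
        = (\<lambda>w. - lin_ext (a_word F l') (lin_ext (contract F y) (contract F x zs)) w)"
    proof -
      have "lin_ext (contract F x) (lin_ext (a_word F l') (contract F y zs))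
          = lin_ext (\<lambda>v. lin_ext (a_word F l') (contract F x v)) (contract F y zs)"
        by (simp add: lin_ext_lin_ext IH length_supp_contract less_imp_le cong: lin_ext_cong)
      also have "\<dots> = lin_ext (a_word F l') (lin_ext (contract F x) (contract F y zs))"
        by (simp add: lin_ext_lin_ext)
      finally show ?thesis
        by (subst contract_anticomm) (simp add: lin_ext_uminus fin_supp_lin_ext)
    qed
    have "lin_ext (contract F x) (a_word F l ys) = (\<lambda>w. F x y * a_word F l zs w
        - lmult y (lin_ext (contract F x) (a_word F l zs)) w
        + lin_ext (contract F x) (lin_ext (a_word F l') (contract F y zs)) w)"
      unfolding ys l a_word_Cons
      by (simp only: lin_ext_add fin_supp_lmult fin_supp_a_word fin_supp_lin_ext fin_supp_contract
          lin_ext_contract_lmult)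
    moreover have "lin_ext (a_word F l) (contract F x ys) = (\<lambda>w. F x y * a_word F l zs w
        - (lmult y (lin_ext (a_word F l) (contract F x zs)) w
        + lin_ext (a_word F l') (lin_ext (contract F y) (contract F x zs)) w))"
      unfolding ys l contract_Cons
      by (simp only: lin_ext_diff lin_ext_smult fin_supp_smult fin_supp_lmult fin_supp_word
          fin_supp_contract lin_ext_a_word_lmult lin_ext_word)
    ultimately show ?thesis
      by (simp add: IH swap fun_eq_iff)
  qed
qed

lemma a_word_compose:
  fixes F :: "'v \<Rightarrow> 'v \<Rightarrow> 'k::field"
  shows "lin_ext (a_word F k) (a_word F l ys) = (\<lambda>w. of_nat ((k + l) choose k) * a_word F (k + l) ys w)"
proof (induction ys arbitrary: k l rule: length_induct)
  case (1 ys)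
  show ?case
  proof (cases "k = 0 \<or> l = 0 \<or> ys = []")
    case True
    then show ?thesis
      by (cases k; cases l) (auto simp: a_word_0 lin_ext_word_id a_word_Suc_Nil)
  next
    case False
    then obtain k' l' y zs where k: "k = Suc k'" and l: "l = Suc l'" and ys: "ys = y # zs"
      by (auto simp: gr0_conv_Suc neq_Nil_conv)
    have IH: "lin_ext (a_word F i) (a_word F j v) = (\<lambda>w. of_nat ((i + j) choose i) * a_word F (i + j) v w)"
      if "length v \<le> length zs" for i j v
      using 1 that ys by simp
    have IH_contract: "lin_ext (a_word F i) (lin_ext (a_word F j) (contract F y zs))
        = (\<lambda>w. of_nat ((i + j) choose i) * lin_ext (a_word F (i + j)) (contract F y zs) w)" for i j
      by (simp add: lin_ext_lin_ext IH length_supp_contract less_imp_le lin_ext_kernel_smult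
          cong: lin_ext_cong)
    have "lin_ext (a_word F k) (a_word F l ys)
        = (\<lambda>w. lmult y (lin_ext (a_word F k) (a_word F l zs)) w
          + lin_ext (a_word F k') (lin_ext (a_word F l) (contract F y zs)) w
          + lin_ext (a_word F k) (lin_ext (a_word F l') (contract F y zs)) w)"
      unfolding ys k l by (simp add: a_word_Cons lin_ext_add fin_supp_lin_ext lin_ext_a_word_lmult
          contract_a_word_comm)
    also have "\<dots> = (\<lambda>w. of_nat ((k + l) choose k) * a_word F (k + l) ys w)"
    proof -
      define n where "n = k + l'"
      have n: "k' + l = n" "k + l = Suc n" "k + l' = n"
        using k l by (simp_all add: n_def)
      have pascal: "(of_nat (Suc n choose k) :: 'k) = of_nat (n choose k') + of_nat (n choose k)"
        using k by simp
      show ?thesis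
        unfolding IH[OF order_refl] IH_contract ys n a_word_Cons
        by (simp add: lmult_linear lmult_smult pascal fun_eq_iff algebra_simps)
    qed
    finally show ?thesis .
  qed
qed

lemma a_op_compose:
  assumes "fin_supp u"
  shows "a_op F k (a_op F l u) = (\<lambda>w. of_nat ((k + l) choose k) * a_op F (k + l) u w)"
  using assms by (simp add: a_op_eq_lin_ext lin_ext_lin_ext a_word_compose lin_ext_kernel_smult)

theorem mainTheorem6:
  fixes scale :: "'k::field \<Rightarrow> 'v::ab_group_add \<Rightarrow> 'v"
    and F :: "'v \<Rightarrow> 'v \<Rightarrow> 'k"
    and k l :: nat
  assumes "Vector_Spaces.vector_space scale"
    and "bilinear_form scale F"
  shows "\<forall>u. fin_supp u \<longrightarrow>
      (\<lambda>w. a_op F k (a_op F l u) w - of_nat ((k + l) choose k) * a_op F (k + l) u w) \<in> tensor_rel scale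
    \<and> (\<lambda>w. a_op F l (a_op F k u) w - of_nat ((k + l) choose k) * a_op F (k + l) u w) \<in> tensor_rel scale"
proof (intro allI impI conjI)
  fix u :: "'v list \<Rightarrow> 'k"
  assume u: "fin_supp u"
  have choose_sym: "(k + l) choose l = (k + l) choose k"
    using binomial_symmetric[of k "k + l"] by simp
  show "(\<lambda>w. a_op F k (a_op F l u) w - of_nat ((k + l) choose k) * a_op F (k + l) u w) \<in> tensor_rel scale"
    using tensor_rel.zero[of scale] by (simp add: a_op_compose[OF u])
  show "(\<lambda>w. a_op F l (a_op F k u) w - of_nat ((k + l) choose k) * a_op F (k + l) u w) \<in> tensor_rel scale"
    using tensor_rel.zero[of scale] by (simp add: a_op_compose[OF u] add.commute[of l k] choose_sym)
qed

end
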